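(* Let $\mathcal{H}$ be a complex Hilbert space and $T, S\in \mathcal{C}_2(\mathcal{H})$. Then: (i) $\big\|TT^* + T^*T\big\|_2 + \sup_{\varphi \in \mathbb{R}}\Big|{\rm tr}\big((e^{i\varphi}T)^2 + (e^{-i\varphi}T^* )^2\big)\Big| \leq 2\big(\|T\|^2_2 + |{\rm tr}(T^2)|\big)$; (ii) $\|TS\|^2_2 + \big|{\rm tr}\big((TS)^2\big)\big| \leq 4\min\Big\{\|T\|^2_2\big(\|S\|^2_2 + |{\rm tr}(S^2)|\big),\ \|S\|^2_2\big(\|T\|^2_2 + |{\rm tr}(T^2)|\big)\Big\}$.
   Context: $\mathcal{C}_2(\mathcal{H})$ denotes the class of Hilbert--Schmidt operators on $\mathcal{H}$, i.e. bounded operators $T$ with $\sum_i\|Te_i\|^2<\infty$ for an orthonormal basis $\{e_i\}$, with Hilbert--Schmidt norm $\|T\|_2=\big(\sum_i\|Te_i\|^2\big)^{1/2}$; ${\rm tr}$ denotes the trace. *)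

theory Defs
  imports "HOL-Analysis.Analysis"
begin

text \<open>Complex inner product spaces and complex Hilbert spaces (not in the distribution
library).  Convention: the inner product is conjugate-linear in the first and linear in
the second argument.\<close>

class complex_inner = real_normed_vector +
  fixes scaleC :: "complex \<Rightarrow> 'a \<Rightarrow> 'a" (infixr \<open>*\<^sub>C\<close> 75)
    and cinner :: "'a \<Rightarrow> 'a \<Rightarrow> complex"
  assumes scaleC_add_right: "a *\<^sub>C (x + y) = a *\<^sub>C x + a *\<^sub>C y"
    and scaleC_add_left: "(a + b) *\<^sub>C x = a *\<^sub>C x + b *\<^sub>C x"
    and scaleC_scaleC: "a *\<^sub>C (b *\<^sub>C x) = (a * b) *\<^sub>C x"
    and scaleC_one: "1 *\<^sub>C x = x"
    and scaleR_scaleC: "scaleR r x = complex_of_real r *\<^sub>C x"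
    and cinner_commute: "cinner x y = cnj (cinner y x)"
    and cinner_add_right: "cinner x (y + z) = cinner x y + cinner x z"
    and cinner_scaleC_right: "cinner x (c *\<^sub>C y) = c * cinner x y"
    and cinner_self_norm: "cinner x x = complex_of_real ((norm x)\<^sup>2)"

class chilbert_space = complex_inner + complete_space

definition cspan :: "'a::complex_inner set \<Rightarrow> 'a set" where
  "cspan B = {x. \<exists>F c. finite F \<and> F \<subseteq> B \<and> x = (\<Sum>b\<in>F. c b *\<^sub>C b)}"

definition is_onb :: "'a::complex_inner set \<Rightarrow> bool" where
  "is_onb B \<longleftrightarrow> (\<forall>e\<in>B. \<forall>f\<in>B. cinner e f = (if e = f then 1 else 0))
      \<and> closure (cspan B) = UNIV"

definition some_onb :: "'a::complex_inner set" where
  "some_onb = (SOME B. is_onb B)"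

definition bounded_clinear :: "('a::complex_inner \<Rightarrow> 'a) \<Rightarrow> bool" where
  "bounded_clinear T \<longleftrightarrow> bounded_linear T \<and> (\<forall>c x. T (c *\<^sub>C x) = c *\<^sub>C T x)"

definition adj :: "('a::complex_inner \<Rightarrow> 'a) \<Rightarrow> ('a \<Rightarrow> 'a)" where
  "adj T = (SOME S. \<forall>x y. cinner (T x) y = cinner x (S y))"

definition hilbert_schmidt :: "('a::complex_inner \<Rightarrow> 'a) \<Rightarrow> bool" where
  "hilbert_schmidt T \<longleftrightarrow> bounded_clinear T \<and>
     (\<exists>B. is_onb B \<and> (\<lambda>e. (norm (T e))\<^sup>2) summable_on B)"

text \<open>Hilbert--Schmidt norm (basis independent for HS operators).\<close>
definition hs_norm :: "('a::complex_inner \<Rightarrow> 'a) \<Rightarrow> real" where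
  "hs_norm T = sqrt (\<Sum>\<^sub>\<infinity>e\<in>some_onb. (norm (T e))\<^sup>2)"

text \<open>Trace (meaningful for trace-class operators, e.g. products of two HS operators).\<close>
definition trace :: "('a::complex_inner \<Rightarrow> 'a) \<Rightarrow> complex" where
  "trace A = (\<Sum>\<^sub>\<infinity>e\<in>some_onb. cinner e (A e))"

end

(* Everything rests on two estimates for Hilbert-Schmidt operators A, B:
   |Ax| <= |A|_2 |x|, hence |AB|_2 <= |A|_2 |B|_2, and |tr(AB)| <= |A|_2 |B|_2, because
   <e, ABe> = <A*e, Be> and the Cauchy-Schwarz inequality over an orthonormal basis
   applies once one knows |A*|_2 = |A|_2 (Parseval's identity used twice).
   For (i): |TT*e + T*Te|^2 <= 2 |T|_2^2 (|T*e|^2 + |Te|^2) summed over a basis gives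
   |TT* + T*T|_2 <= 2 |T|_2^2, and with c = e^(i phi)
   the trace of c^2 T^2 + (cnj c)^2 T*^2 is 2 Re (c^2 tr T^2), of modulus <= 2 |tr T^2|.
   For (ii): |TS|_2^2 and |tr((TS)^2)| are both <= |T|_2^2 |S|_2^2, which is at most
   each of the two terms of the minimum. *)

theory Submission
  imports Defs
begin

lemma cinner_add_left: "cinner (x + y) z = cinner x z + cinner (y::'a::complex_inner) z"
  by (metis cinner_commute cinner_add_right complex_cnj_add)

lemma cinner_scaleC_left: "cinner (c *\<^sub>C x) (y::'a::complex_inner) = cnj c * cinner x y"
  by (metis cinner_commute cinner_scaleC_right complex_cnj_mult)

lemma cinner_zero_right [simp]: "cinner (x::'a::complex_inner) 0 = 0"
  using cinner_add_right[of x 0 0] by simp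

lemma cinner_zero_left [simp]: "cinner 0 (x::'a::complex_inner) = 0"
  by (metis cinner_commute cinner_zero_right complex_cnj_zero)

lemma cinner_minus_right: "cinner (x::'a::complex_inner) (- y) = - cinner x y"
  using cinner_add_right[of x y "- y"] by (simp add: eq_neg_iff_add_eq_0 add.commute)

lemma cinner_minus_left: "cinner (- x) (y::'a::complex_inner) = - cinner x y"
  by (metis cinner_commute cinner_minus_right complex_cnj_minus)

lemma cinner_diff_right: "cinner (x::'a::complex_inner) (y - z) = cinner x y - cinner x z"
  by (metis cinner_add_right cinner_minus_right diff_conv_add_uminus)

lemma cinner_diff_left: "cinner (x - y) (z::'a::complex_inner) = cinner x z - cinner y z"
  by (metis cinner_add_left cinner_minus_left diff_conv_add_uminus)

lemma cinner_sum_right: "cinner (x::'a::complex_inner) (sum f F) = (\<Sum>i\<in>F. cinner x (f i))"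
  by (induction F rule: infinite_finite_induct) (auto simp: cinner_add_right)

lemma cinner_sum_left: "cinner (sum f F) (x::'a::complex_inner) = (\<Sum>i\<in>F. cinner (f i) x)"
  by (induction F rule: infinite_finite_induct) (auto simp: cinner_add_left)

lemma scaleC_zero_left [simp]: "0 *\<^sub>C (x::'a::complex_inner) = 0"
  by (metis scaleR_scaleC scaleR_zero_left of_real_0)

lemma scaleC_minus_left: "(- c) *\<^sub>C (x::'a::complex_inner) = - (c *\<^sub>C x)"
  using scaleC_add_left[of c "- c" x]
  by (simp add: eq_neg_iff_add_eq_0 add.commute)

lemma scaleC_diff_left: "(c - d) *\<^sub>C (x::'a::complex_inner) = c *\<^sub>C x - d *\<^sub>C x"
  by (metis diff_conv_add_uminus scaleC_add_left scaleC_minus_left)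

lemma norm_cinner_le: "cmod (cinner x y) \<le> norm x * norm (y::'a::complex_inner)"
proof (cases "y = 0")
  case True
  then show ?thesis by simp
next
  case False
  define n where "n = (norm y)\<^sup>2"
  have n: "n > 0" using False by (simp add: n_def)
  define a where "a = cinner y x"
  define z where "z = x - (a / of_real n) *\<^sub>C y"
  have yy: "cinner y y = of_real n" by (simp add: n_def cinner_self_norm)
  have xy: "cinner x y = cnj a" by (simp add: a_def cinner_commute[of x y])
  have "cinner z z = cinner x x - a * cnj a / of_real n"
    unfolding z_def using n
    by (simp add: cinner_diff_left cinner_diff_right cinner_scaleC_left cinner_scaleC_right
        xy yy a_def[symmetric] field_simps)
  also have "a * cnj a = of_real ((cmod a)\<^sup>2)" by (simp add: complex_norm_square[symmetric])
  finally have "(norm z)\<^sup>2 = (norm x)\<^sup>2 - (cmod a)\<^sup>2 / n"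
    by (metis cinner_self_norm of_real_diff of_real_divide of_real_eq_iff)
  then have "(cmod a)\<^sup>2 / n \<le> (norm x)\<^sup>2"
    by (metis diff_ge_0_iff_ge zero_le_power2)
  then have "(cmod a)\<^sup>2 \<le> (norm x * norm y)\<^sup>2"
    using n by (simp add: pos_divide_le_eq n_def power_mult_distrib)
  then have "cmod a \<le> norm x * norm y"
    by (meson mult_nonneg_nonneg norm_ge_zero power2_le_imp_le)
  then show ?thesis
    by (metis a_def cinner_commute complex_mod_cnj)
qed

section \<open>Orthonormal bases and Parseval's identity\<close>

definition orthonormal :: "'a::complex_inner set \<Rightarrow> bool" where
  "orthonormal B \<longleftrightarrow> (\<forall>e\<in>B. \<forall>f\<in>B. cinner e f = (if e = f then 1 else 0))"

lemma is_onb_orthonormal: "is_onb B \<Longrightarrow> orthonormal B"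
  by (simp add: is_onb_def orthonormal_def)

lemma orthonormal_cinner_sum:
  assumes "orthonormal B" "finite F" "F \<subseteq> B" "e \<in> B"
  shows "cinner e (\<Sum>f\<in>F. c f *\<^sub>C f) = (if e \<in> F then c e else 0)"
proof -
  have "cinner e (\<Sum>f\<in>F. c f *\<^sub>C f) = (\<Sum>f\<in>F. c f * cinner e f)"
    by (simp add: cinner_sum_right cinner_scaleC_right)
  also have "\<dots> = (\<Sum>f\<in>F. if e = f then c f else 0)"
    using assms by (intro sum.cong) (auto simp: orthonormal_def)
  finally show ?thesis
    using assms(2) by (simp add: sum.delta)
qed

lemma orthonormal_norm_sum:
  assumes "orthonormal B" "finite F" "F \<subseteq> B"
  shows "(norm (\<Sum>f\<in>F. c f *\<^sub>C f))\<^sup>2 = (\<Sum>f\<in>F. (cmod (c f))\<^sup>2)"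
proof -
  have "cinner (\<Sum>f\<in>F. c f *\<^sub>C f) (\<Sum>f\<in>F. c f *\<^sub>C f)
      = (\<Sum>e\<in>F. cnj (c e) * cinner e (\<Sum>f\<in>F. c f *\<^sub>C f))"
    by (simp add: cinner_sum_left cinner_scaleC_left)
  also have "\<dots> = (\<Sum>e\<in>F. cnj (c e) * c e)"
    using assms by (intro sum.cong refl) (metis orthonormal_cinner_sum subsetD)
  also have "\<dots> = of_real (\<Sum>f\<in>F. (cmod (c f))\<^sup>2)"
    by (simp add: mult.commute flip: complex_norm_square)
  finally show ?thesis
    by (metis cinner_self_norm of_real_eq_iff)
qed

lemma norm_add_Pythagorean_cinner:
  assumes "cinner u w = 0"
  shows "(norm (u + w))\<^sup>2 = (norm u)\<^sup>2 + (norm (w::'a::complex_inner))\<^sup>2"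
proof -
  have "cinner w u = 0" using assms by (metis cinner_commute complex_cnj_zero)
  then have "cinner (u + w) (u + w) = cinner u u + cinner w w"
    using assms by (simp add: cinner_add_left cinner_add_right)
  then show ?thesis
    by (metis cinner_self_norm of_real_add of_real_eq_iff)
qed

definition proj :: "'a::complex_inner set \<Rightarrow> 'a \<Rightarrow> 'a" where
  "proj F x = (\<Sum>e\<in>F. cinner e x *\<^sub>C e)"

lemma cinner_diff_proj_sum:
  assumes "orthonormal B" "finite F" "F \<subseteq> B"
  shows "cinner (x - proj F x) (\<Sum>e\<in>F. d e *\<^sub>C e) = 0"
proof -
  have "cinner e (x - proj F x) = 0" if "e \<in> F" for e
    using assms that by (simp add: proj_def cinner_diff_right orthonormal_cinner_sum subsetD)
  then have "cinner (x - proj F x) e = 0" if "e \<in> F" for e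
    using that by (metis cinner_commute complex_cnj_zero)
  then show ?thesis
    by (simp add: cinner_sum_right cinner_scaleC_right)
qed

lemma norm_diff_proj:
  assumes "orthonormal B" "finite F" "F \<subseteq> B"
  shows "(norm (x - proj F x))\<^sup>2 = (norm x)\<^sup>2 - (\<Sum>e\<in>F. (cmod (cinner e x))\<^sup>2)"
proof -
  have "(norm x)\<^sup>2 = (norm ((x - proj F x) + proj F x))\<^sup>2"
    by simp
  also have "\<dots> = (norm (x - proj F x))\<^sup>2 + (norm (proj F x))\<^sup>2"
    unfolding proj_def
    by (rule norm_add_Pythagorean_cinner[OF cinner_diff_proj_sum[OF assms, of x "\<lambda>e. cinner e x",
          unfolded proj_def]])
  also have "(norm (proj F x))\<^sup>2 = (\<Sum>e\<in>F. (cmod (cinner e x))\<^sup>2)"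
    unfolding proj_def by (rule orthonormal_norm_sum[OF assms])
  finally show ?thesis by simp
qed

lemma norm_diff_proj_le:
  assumes "orthonormal B" "finite F" "F \<subseteq> B"
  shows "norm (x - proj F x) \<le> norm (x - (\<Sum>e\<in>F. d e *\<^sub>C e))"
proof -
  have "(norm (x - (\<Sum>e\<in>F. d e *\<^sub>C e)))\<^sup>2
      = (norm ((x - proj F x) + (\<Sum>e\<in>F. (cinner e x - d e) *\<^sub>C e)))\<^sup>2"
    by (simp add: proj_def scaleC_diff_left sum_subtractf)
  also have "\<dots> = (norm (x - proj F x))\<^sup>2 + (norm (\<Sum>e\<in>F. (cinner e x - d e) *\<^sub>C e))\<^sup>2"
    by (rule norm_add_Pythagorean_cinner[OF cinner_diff_proj_sum[OF assms]])
  finally have "(norm (x - proj F x))\<^sup>2 \<le> (norm (x - (\<Sum>e\<in>F. d e *\<^sub>C e)))\<^sup>2"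
    by simp
  then show ?thesis
    by (rule power2_le_imp_le) simp
qed

lemma onb_proj_approx:
  assumes B: "is_onb B" and "\<epsilon> > 0"
  obtains F0 where "finite F0" "F0 \<subseteq> B"
    "\<And>F. finite F \<Longrightarrow> F0 \<subseteq> F \<Longrightarrow> F \<subseteq> B \<Longrightarrow> norm (x - proj F x) < \<epsilon>"
proof -
  have "x \<in> closure (cspan B)"
    using B by (simp add: is_onb_def)
  then obtain y where "y \<in> cspan B" "dist y x < \<epsilon>"
    using \<open>\<epsilon> > 0\<close> unfolding closure_approachable by blast
  then obtain G c where G: "finite G" "G \<subseteq> B" and y: "y = (\<Sum>b\<in>G. c b *\<^sub>C b)"
    by (auto simp: cspan_def)
  have "norm (x - proj F x) < \<epsilon>" if F: "finite F" "G \<subseteq> F" "F \<subseteq> B" for F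
  proof -
    have "y = (\<Sum>b\<in>F. (if b \<in> G then c b else 0) *\<^sub>C b)"
      unfolding y using F by (intro sum.mono_neutral_cong_left) auto
    then have "norm (x - proj F x) \<le> norm (x - y)"
      using norm_diff_proj_le[OF is_onb_orthonormal[OF B] F(1,3)] by simp
    also have "\<dots> < \<epsilon>"
      using \<open>dist y x < \<epsilon>\<close> by (simp add: dist_norm norm_minus_commute)
    finally show ?thesis .
  qed
  with G show ?thesis
    by (rule that)
qed

lemma has_sum_Parseval:
  assumes B: "is_onb B"
  shows "((\<lambda>e. (cmod (cinner e x))\<^sup>2) has_sum (norm x)\<^sup>2) B"
  unfolding has_sum_def tendsto_iff eventually_finite_subsets_at_top
proof (intro allI impI)
  fix \<epsilon> :: real
  assume "\<epsilon> > 0"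
  then obtain F0 where F0: "finite F0" "F0 \<subseteq> B"
    and approx: "\<And>F. finite F \<Longrightarrow> F0 \<subseteq> F \<Longrightarrow> F \<subseteq> B \<Longrightarrow> norm (x - proj F x) < sqrt \<epsilon>"
    using onb_proj_approx[OF B real_sqrt_gt_zero, where x = x] by blast
  have "dist (\<Sum>e\<in>F. (cmod (cinner e x))\<^sup>2) ((norm x)\<^sup>2) < \<epsilon>"
    if F: "finite F" "F0 \<subseteq> F" "F \<subseteq> B" for F
  proof -
    have "(norm (x - proj F x))\<^sup>2 < (sqrt \<epsilon>)\<^sup>2"
      using approx[OF F] by (intro power_strict_mono) auto
    moreover have "(norm (x - proj F x))\<^sup>2 = (norm x)\<^sup>2 - (\<Sum>e\<in>F. (cmod (cinner e x))\<^sup>2)"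
      by (rule norm_diff_proj[OF is_onb_orthonormal[OF B] F(1,3)])
    moreover have "(norm (x - proj F x))\<^sup>2 \<ge> 0"
      by simp
    ultimately show ?thesis
      using \<open>\<epsilon> > 0\<close> by (simp add: dist_real_def)
  qed
  with F0 show "\<exists>X. finite X \<and> X \<subseteq> B \<and> (\<forall>Y. finite Y \<and> X \<subseteq> Y \<and> Y \<subseteq> B \<longrightarrow>
      dist (\<Sum>e\<in>Y. (cmod (cinner e x))\<^sup>2) ((norm x)\<^sup>2) < \<epsilon>)"
    by blast
qed

lemma has_sum_onb_expansion:
  assumes B: "is_onb B"
  shows "((\<lambda>e. cinner e x *\<^sub>C e) has_sum x) B"
  unfolding has_sum_def tendsto_iff eventually_finite_subsets_at_top
proof (intro allI impI)
  fix \<epsilon> :: real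
  assume "\<epsilon> > 0"
  then obtain F0 where F0: "finite F0" "F0 \<subseteq> B"
    and approx: "\<And>F. finite F \<Longrightarrow> F0 \<subseteq> F \<Longrightarrow> F \<subseteq> B \<Longrightarrow> norm (x - proj F x) < \<epsilon>"
    using onb_proj_approx[OF B, where x = x] by blast
  have "dist (\<Sum>e\<in>F. cinner e x *\<^sub>C e) x = norm (x - proj F x)" for F
    by (simp add: proj_def dist_norm norm_minus_commute)
  with F0 approx show "\<exists>X. finite X \<and> X \<subseteq> B \<and> (\<forall>Y. finite Y \<and> X \<subseteq> Y \<and> Y \<subseteq> B \<longrightarrow>
      dist (\<Sum>e\<in>Y. cinner e x *\<^sub>C e) x < \<epsilon>)"
    by auto
qed

lemma nonneg_has_sum_small_tails:
  fixes g :: "'a \<Rightarrow> real"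
  assumes g: "(g has_sum L) A" and nonneg: "\<And>x. x \<in> A \<Longrightarrow> g x \<ge> 0" and "\<epsilon> > 0"
  shows "\<exists>F0. finite F0 \<and> F0 \<subseteq> A \<and> (\<forall>F. finite F \<and> F \<subseteq> A - F0 \<longrightarrow> sum g F < \<epsilon>)"
proof -
  obtain F0 where F0: "finite F0" "F0 \<subseteq> A" "dist (sum g F0) L < \<epsilon>"
    using g \<open>\<epsilon> > 0\<close> unfolding has_sum_def tendsto_iff eventually_finite_subsets_at_top by blast
  have "sum g F < \<epsilon>" if F: "finite F" "F \<subseteq> A - F0" for F
  proof -
    have "sum g F0 + sum g F = sum g (F0 \<union> F)"
      using F F0 by (intro sum.union_disjoint[symmetric]) auto
    also have "\<dots> \<le> L"
      using F F0 nonneg by (intro finite_sum_le_has_sum[OF g]) auto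
    finally show ?thesis
      using F0(3) by (simp add: dist_real_def)
  qed
  with F0 show ?thesis by blast
qed

lemma summable_on_small_tails:
  fixes f :: "'a \<Rightarrow> 'b::{real_normed_vector, complete_space}"
  assumes tails: "\<And>\<epsilon>. \<epsilon> > 0 \<Longrightarrow>
    \<exists>F0. finite F0 \<and> F0 \<subseteq> A \<and> (\<forall>F. finite F \<and> F \<subseteq> A - F0 \<longrightarrow> norm (sum f F) < \<epsilon>)"
  shows "f summable_on A"
proof -
  have "\<exists>P. eventually P (finite_subsets_at_top A) \<and>
          (\<forall>F F'. P F \<and> P F' \<longrightarrow> dist (sum f F) (sum f F') < \<epsilon>)" if "\<epsilon> > 0" for \<epsilon>
  proof -
    obtain F0 where F0: "finite F0" "F0 \<subseteq> A"
      and small: "\<And>F. finite F \<Longrightarrow> F \<subseteq> A - F0 \<Longrightarrow> norm (sum f F) < \<epsilon> / 2"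
      using tails[of "\<epsilon> / 2"] \<open>\<epsilon> > 0\<close> by auto
    define P where "P F \<longleftrightarrow> finite F \<and> F0 \<subseteq> F \<and> F \<subseteq> A" for F
    have "eventually P (finite_subsets_at_top A)"
      unfolding P_def eventually_finite_subsets_at_top using F0 by blast
    moreover have "dist (sum f F) (sum f F') < \<epsilon>" if "P F" "P F'" for F F'
    proof -
      have "sum f F = sum f F0 + sum f (F - F0)" "sum f F' = sum f F0 + sum f (F' - F0)"
        using that by (auto simp: P_def sum.subset_diff)
      then have "dist (sum f F) (sum f F') \<le> norm (sum f (F - F0)) + norm (sum f (F' - F0))"
        by (simp add: dist_norm norm_triangle_ineq4)
      also have "\<dots> < \<epsilon> / 2 + \<epsilon> / 2"
        using that by (intro add_strict_mono small) (auto simp: P_def)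
      finally show ?thesis by simp
    qed
    ultimately show ?thesis by blast
  qed
  then have "cauchy_filter (filtermap (sum f) (finite_subsets_at_top A))"
    by (simp add: cauchy_filter_metric_filtermap)
  then obtain L where "(sum f \<longlongrightarrow> L) (finite_subsets_at_top A)"
    using complete_uniform[where S = UNIV] complete_UNIV by (force simp: filterlim_def)
  then show ?thesis
    by (auto simp: summable_on_def has_sum_def)
qed

lemma orthonormal_summable_on:
  fixes B :: "'a::chilbert_space set"
  assumes ON: "orthonormal B" and sq: "(\<lambda>e. (cmod (c e))\<^sup>2) summable_on B"
  shows "(\<lambda>e. c e *\<^sub>C e) summable_on B"
proof (rule summable_on_small_tails)
  fix \<epsilon> :: real
  assume "\<epsilon> > 0"
  then obtain F0 where F0: "finite F0" "F0 \<subseteq> B"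
    and small: "\<forall>F. finite F \<and> F \<subseteq> B - F0 \<longrightarrow> (\<Sum>e\<in>F. (cmod (c e))\<^sup>2) < \<epsilon>\<^sup>2"
    using nonneg_has_sum_small_tails[OF has_sum_infsum[OF sq], of "\<epsilon>\<^sup>2"] by auto
  have "norm (\<Sum>e\<in>F. c e *\<^sub>C e) < \<epsilon>" if "finite F" "F \<subseteq> B - F0" for F
  proof -
    have "(norm (\<Sum>e\<in>F. c e *\<^sub>C e))\<^sup>2 = (\<Sum>e\<in>F. (cmod (c e))\<^sup>2)"
      using that by (intro orthonormal_norm_sum[OF ON]) auto
    also have "\<dots> < \<epsilon>\<^sup>2"
      using small that by blast
    finally have "(norm (\<Sum>e\<in>F. c e *\<^sub>C e))\<^sup>2 < \<epsilon>\<^sup>2" .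
    then show ?thesis
      using \<open>\<epsilon> > 0\<close> by (simp add: power_less_imp_less_base)
  qed
  with F0 show "\<exists>F0. finite F0 \<and> F0 \<subseteq> B \<and>
      (\<forall>F. finite F \<and> F \<subseteq> B - F0 \<longrightarrow> norm (\<Sum>e\<in>F. c e *\<^sub>C e) < \<epsilon>)"
    by blast
qed

lemma bounded_linear_cinner_right: "bounded_linear (\<lambda>y. cinner (x::'a::complex_inner) y)"
proof (rule bounded_linear_intro[where K = "norm x"])
  show "cinner x (r *\<^sub>R y) = r *\<^sub>R cinner x y" for r y
    by (simp add: scaleR_scaleC cinner_scaleC_right scaleR_conv_of_real)
  show "norm (cinner x y) \<le> norm y * norm x" for y
    using norm_cinner_le[of x y] by (simp add: mult.commute)
qed (rule cinner_add_right)

lemma bounded_linear_cinner_left: "bounded_linear (\<lambda>x. cinner x (y::'a::complex_inner))"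
proof (rule bounded_linear_intro[where K = "norm y"])
  show "cinner (r *\<^sub>R x) y = r *\<^sub>R cinner x y" for r x
    by (simp add: scaleR_scaleC cinner_scaleC_left scaleR_conv_of_real)
  show "norm (cinner x y) \<le> norm x * norm y" for x
    by (rule norm_cinner_le)
qed (rule cinner_add_left)

lemma adjoint_exists:
  fixes T :: "'a::chilbert_space \<Rightarrow> 'a"
  assumes T: "bounded_clinear T" and B: "is_onb B"
    and sm: "(\<lambda>e. (norm (T e))\<^sup>2) summable_on B"
  shows "\<exists>S. \<forall>x y. cinner (T x) y = cinner x (S y)"
proof -
  have blT: "bounded_linear T" and clT: "\<And>c x. T (c *\<^sub>C x) = c *\<^sub>C T x"
    using T by (auto simp: bounded_clinear_def)
  define S where "S y = (\<Sum>\<^sub>\<infinity>e\<in>B. cinner (T e) y *\<^sub>C e)" for y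
  have S: "((\<lambda>e. cinner (T e) y *\<^sub>C e) has_sum S y) B" for y
  proof -
    have "(\<lambda>e. (norm y)\<^sup>2 * (norm (T e))\<^sup>2) summable_on B"
      using sm by (rule summable_on_cmult_right)
    then have "(\<lambda>e. (cmod (cinner (T e) y))\<^sup>2) summable_on B"
    proof (rule summable_on_comparison_test)
      show "(cmod (cinner (T e) y))\<^sup>2 \<le> (norm y)\<^sup>2 * (norm (T e))\<^sup>2" for e
        using norm_cinner_le[of "T e" y]
        by (metis mult.commute norm_ge_zero power_mono power_mult_distrib)
    qed simp
    then show ?thesis
      unfolding S_def by (intro has_sum_infsum orthonormal_summable_on[OF is_onb_orthonormal[OF B]])
  qed
  have "cinner (T x) y = cinner x (S y)" for x y
  proof -
    have "((\<lambda>e. cinner (T (cinner e x *\<^sub>C e)) y) has_sum cinner (T x) y) B"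
      by (intro has_sum_bounded_linear[OF bounded_linear_cinner_left]
          has_sum_bounded_linear[OF blT] has_sum_onb_expansion[OF B])
    also have "(\<lambda>e. cinner (T (cinner e x *\<^sub>C e)) y) = (\<lambda>e. cinner x (cinner (T e) y *\<^sub>C e))"
      by (simp add: clT cinner_scaleC_left cinner_scaleC_right mult.commute flip: cinner_commute)
    finally show ?thesis
      using has_sum_bounded_linear[OF bounded_linear_cinner_right S] by (rule has_sum_unique)
  qed
  then show ?thesis by blast
qed

text \<open>Both sums equal \<open>\<Sum>\<^sub>e \<Sum>\<^sub>f \<bar>\<langle>f, T e\<rangle>\<bar>\<^sup>2\<close>, summed in the two possible orders (Parseval twice).\<close>

lemma has_sum_norm_sq_adjoint:
  fixes T S :: "'a::complex_inner \<Rightarrow> 'a"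
  assumes A: "is_onb A" and C: "is_onb C" and adj: "\<And>x y. cinner (T x) y = cinner x (S y)"
    and hs: "((\<lambda>e. (norm (T e))\<^sup>2) has_sum s) A"
  shows "((\<lambda>f. (norm (S f))\<^sup>2) has_sum s) C"
proof -
  define h where "h p = (cmod (cinner (snd p) (T (fst p))))\<^sup>2" for p
  have inner_T: "((\<lambda>f. h (e, f)) has_sum (norm (T e))\<^sup>2) C" for e
    unfolding h_def using has_sum_Parseval[OF C, of "T e"] by simp
  have "h summable_on A \<times> C"
    by (rule summable_on_SigmaI[OF inner_T]) (use hs in \<open>auto simp: h_def summable_on_def\<close>)
  then obtain t where t: "(h has_sum t) (A \<times> C)"
    by (auto simp: summable_on_def)
  have "t = s"
    using has_sum_SigmaD[OF t inner_T] hs by (rule has_sum_unique)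
  then have swapped: "((\<lambda>(f, e). h (e, f)) has_sum s) (C \<times> A)"
    using has_sum_swap[THEN iffD1, OF t] by simp
  have inner_S: "((\<lambda>e. h (e, f)) has_sum (norm (S f))\<^sup>2) A" for f
  proof -
    have "h (e, f) = (cmod (cinner e (S f)))\<^sup>2" for e
      unfolding h_def by (simp add: adj[symmetric]) (metis cinner_commute complex_mod_cnj)
    then show ?thesis
      using has_sum_Parseval[OF A, of "S f"] by simp
  qed
  show ?thesis
    by (rule has_sum_SigmaD[OF swapped]) (simp add: inner_S)
qed

section \<open>Hilbert--Schmidt operators\<close>

lemma hilbert_schmidt_some_onb:
  assumes "hilbert_schmidt (T::'a::complex_inner \<Rightarrow> 'a)"
  shows "is_onb (some_onb :: 'a set)"
  using assms unfolding hilbert_schmidt_def some_onb_def by (metis someI)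

lemma cinner_adj_right:
  fixes T :: "'a::chilbert_space \<Rightarrow> 'a"
  assumes "hilbert_schmidt T"
  shows "cinner (T x) y = cinner x (adj T y)"
proof -
  have "\<exists>S. \<forall>x y. cinner (T x) y = cinner x (S y)"
    using assms adjoint_exists unfolding hilbert_schmidt_def by blast
  then have "\<forall>x y. cinner (T x) y = cinner x (adj T y)"
    unfolding adj_def by (rule someI_ex)
  then show ?thesis by blast
qed

lemma cinner_adj_left:
  fixes T :: "'a::chilbert_space \<Rightarrow> 'a"
  assumes "hilbert_schmidt T"
  shows "cinner (adj T x) y = cinner x (T y)"
  by (metis assms cinner_adj_right cinner_commute)

lemma hs_norm_nonneg: "hs_norm T \<ge> 0"
  by (simp add: hs_norm_def infsum_nonneg)

text \<open>\<^const>\<open>hilbert_schmidt\<close> only asks for summability in some basis \<open>B\<close>, while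
  \<^const>\<open>hs_norm\<close> is computed in \<^const>\<open>some_onb\<close>; passing through the adjoint moves the
  sum from one basis to the other.\<close>

lemma
  fixes T :: "'a::chilbert_space \<Rightarrow> 'a"
  assumes "hilbert_schmidt T"
  shows has_sum_hs_norm: "((\<lambda>e. (norm (T e))\<^sup>2) has_sum (hs_norm T)\<^sup>2) some_onb"
    and has_sum_hs_norm_adj: "((\<lambda>e. (norm (adj T e))\<^sup>2) has_sum (hs_norm T)\<^sup>2) some_onb"
proof -
  from assms obtain B where B: "is_onb B" and sm: "(\<lambda>e. (norm (T e))\<^sup>2) summable_on B"
    by (auto simp: hilbert_schmidt_def)
  note onb = hilbert_schmidt_some_onb[OF assms]
  define s where "s = (\<Sum>\<^sub>\<infinity>e\<in>B. (norm (T e))\<^sup>2)"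
  have "((\<lambda>e. (norm (adj T e))\<^sup>2) has_sum s) some_onb"
    using has_sum_norm_sq_adjoint[OF B onb cinner_adj_right[OF assms]] sm by (simp add: s_def)
  moreover from this have "((\<lambda>e. (norm (T e))\<^sup>2) has_sum s) some_onb"
    by (rule has_sum_norm_sq_adjoint[OF onb onb cinner_adj_left[OF assms]])
  moreover have "s \<ge> 0"
    by (simp add: s_def infsum_nonneg)
  ultimately show "((\<lambda>e. (norm (T e))\<^sup>2) has_sum (hs_norm T)\<^sup>2) some_onb"
    and "((\<lambda>e. (norm (adj T e))\<^sup>2) has_sum (hs_norm T)\<^sup>2) some_onb"
    by (simp_all add: hs_norm_def infsumI)
qed

lemma norm_sq_le_has_sum_adjoint:
  fixes T S :: "'a::complex_inner \<Rightarrow> 'a"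
  assumes B: "is_onb B" and adj: "\<And>x y. cinner (S x) y = cinner x (T y)"
    and hs: "((\<lambda>e. (norm (S e))\<^sup>2) has_sum N) B"
  shows "(norm (T x))\<^sup>2 \<le> N * (norm x)\<^sup>2"
proof -
  have "(norm (T x))\<^sup>2 \<le> (norm x)\<^sup>2 * N"
  proof (rule has_sum_mono[OF has_sum_Parseval[OF B] has_sum_cmult_right[OF hs]])
    fix f
    have "cmod (cinner f (T x)) \<le> norm (S f) * norm x"
      using norm_cinner_le[of "S f" x] by (simp add: adj)
    then show "(cmod (cinner f (T x)))\<^sup>2 \<le> (norm x)\<^sup>2 * (norm (S f))\<^sup>2"
      by (metis mult.commute norm_ge_zero power_mono power_mult_distrib)
  qed
  then show ?thesis by (simp add: mult.commute)
qed

lemma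
  fixes T :: "'a::chilbert_space \<Rightarrow> 'a"
  assumes "hilbert_schmidt T"
  shows norm_sq_le_hs_norm: "(norm (T x))\<^sup>2 \<le> (hs_norm T)\<^sup>2 * (norm x)\<^sup>2"
    and norm_sq_adj_le_hs_norm: "(norm (adj T x))\<^sup>2 \<le> (hs_norm T)\<^sup>2 * (norm x)\<^sup>2"
  by (rule norm_sq_le_has_sum_adjoint[OF hilbert_schmidt_some_onb[OF assms]
        cinner_adj_left[OF assms] has_sum_hs_norm_adj[OF assms]])
     (rule norm_sq_le_has_sum_adjoint[OF hilbert_schmidt_some_onb[OF assms]
        cinner_adj_right[OF assms] has_sum_hs_norm[OF assms]])

lemma hs_norm_sq_le_has_sum:
  fixes A :: "'a::complex_inner \<Rightarrow> 'a"
  assumes g: "(g has_sum G) some_onb" and le: "\<And>e. (norm (A e))\<^sup>2 \<le> g e"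
  shows "(\<lambda>e. (norm (A e))\<^sup>2) summable_on some_onb" and "(hs_norm A)\<^sup>2 \<le> G"
proof -
  show sm: "(\<lambda>e. (norm (A e))\<^sup>2) summable_on some_onb"
    by (rule summable_on_comparison_test[OF has_sum_imp_summable[OF g] le]) simp
  have "(\<Sum>\<^sub>\<infinity>e\<in>some_onb. (norm (A e))\<^sup>2) \<le> G"
    by (rule has_sum_mono[OF has_sum_infsum[OF sm] g le])
  then show "(hs_norm A)\<^sup>2 \<le> G"
    by (simp add: hs_norm_def infsum_nonneg)
qed

lemma
  fixes T S :: "'a::chilbert_space \<Rightarrow> 'a"
  assumes T: "hilbert_schmidt T" and S: "hilbert_schmidt S"
  shows hilbert_schmidt_comp: "hilbert_schmidt (T \<circ> S)"
    and hs_norm_comp_le: "hs_norm (T \<circ> S) \<le> hs_norm T * hs_norm S"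
proof -
  have g: "((\<lambda>e. (hs_norm T)\<^sup>2 * (norm (S e))\<^sup>2) has_sum (hs_norm T)\<^sup>2 * (hs_norm S)\<^sup>2) some_onb"
    by (rule has_sum_cmult_right[OF has_sum_hs_norm[OF S]])
  have le: "(norm ((T \<circ> S) e))\<^sup>2 \<le> (hs_norm T)\<^sup>2 * (norm (S e))\<^sup>2" for e
    unfolding o_apply by (rule norm_sq_le_hs_norm[OF T])
  note bound = hs_norm_sq_le_has_sum[OF g le]
  have "bounded_clinear (T \<circ> S)"
    using T S by (auto simp: hilbert_schmidt_def bounded_clinear_def o_def intro: bounded_linear_compose)
  then show "hilbert_schmidt (T \<circ> S)"
    using hilbert_schmidt_some_onb[OF S] bound(1) by (auto simp: hilbert_schmidt_def)
  have "(hs_norm (T \<circ> S))\<^sup>2 \<le> (hs_norm T * hs_norm S)\<^sup>2"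
    using bound(2) by (simp only: power_mult_distrib)
  then show "hs_norm (T \<circ> S) \<le> hs_norm T * hs_norm S"
    by (rule power2_le_imp_le) (simp add: hs_norm_nonneg)
qed

lemma has_sum_Cauchy_Schwarz:
  fixes f g :: "'a \<Rightarrow> real"
  assumes f: "((\<lambda>x. (f x)\<^sup>2) has_sum F) A" and g: "((\<lambda>x. (g x)\<^sup>2) has_sum G) A"
  shows "(\<lambda>x. \<bar>f x * g x\<bar>) summable_on A"
    and "(\<Sum>\<^sub>\<infinity>x\<in>A. \<bar>f x * g x\<bar>) \<le> sqrt F * sqrt G"
proof -
  have sq: "(\<lambda>x. (f x)\<^sup>2 + (g x)\<^sup>2) summable_on A"
    using f g by (intro summable_on_add) (auto simp: summable_on_def)
  have bound: "\<bar>f x * g x\<bar> \<le> (f x)\<^sup>2 + (g x)\<^sup>2" for x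
  proof -
    have "2 * (\<bar>f x\<bar> * \<bar>g x\<bar>) \<le> (f x)\<^sup>2 + (g x)\<^sup>2"
      using sum_squares_bound[of "\<bar>f x\<bar>" "\<bar>g x\<bar>"] by (simp add: mult.assoc)
    moreover have "0 \<le> \<bar>f x\<bar> * \<bar>g x\<bar>"
      by simp
    ultimately show ?thesis
      unfolding abs_mult by linarith
  qed
  show sm: "(\<lambda>x. \<bar>f x * g x\<bar>) summable_on A"
    by (rule summable_on_comparison_test[OF sq bound]) simp
  have "F \<ge> 0"
    by (rule has_sum_nonneg[OF f]) simp
  show "(\<Sum>\<^sub>\<infinity>x\<in>A. \<bar>f x * g x\<bar>) \<le> sqrt F * sqrt G"
  proof (rule infsum_le_finite_sums[OF sm])
    fix X
    assume X: "finite X" "X \<subseteq> A"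
    have "(\<Sum>x\<in>X. \<bar>f x\<bar> * \<bar>g x\<bar>)\<^sup>2 \<le> (\<Sum>x\<in>X. (f x)\<^sup>2) * (\<Sum>x\<in>X. (g x)\<^sup>2)"
      using Cauchy_Schwarz_ineq_sum[of "\<lambda>x. \<bar>f x\<bar>" "\<lambda>x. \<bar>g x\<bar>" X] by simp
    then have "(\<Sum>x\<in>X. \<bar>f x * g x\<bar>) \<le> sqrt (\<Sum>x\<in>X. (f x)\<^sup>2) * sqrt (\<Sum>x\<in>X. (g x)\<^sup>2)"
      by (simp add: abs_mult real_le_rsqrt flip: real_sqrt_mult)
    also have "\<dots> \<le> sqrt F * sqrt G"
      using X \<open>F \<ge> 0\<close> by (intro mult_mono real_sqrt_le_mono finite_sum_le_has_sum[OF f]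
          finite_sum_le_has_sum[OF g]) (auto simp: sum_nonneg)
    finally show "(\<Sum>x\<in>X. \<bar>f x * g x\<bar>) \<le> sqrt F * sqrt G" .
  qed
qed

lemma
  fixes A B :: "'a::chilbert_space \<Rightarrow> 'a"
  assumes A: "hilbert_schmidt A" and B: "hilbert_schmidt B"
  shows abs_summable_trace_comp: "(\<lambda>e. norm (cinner e (A (B e)))) summable_on some_onb"
    and norm_trace_comp_le: "cmod (trace (A \<circ> B)) \<le> hs_norm A * hs_norm B"
proof -
  note CS = has_sum_Cauchy_Schwarz[OF has_sum_hs_norm_adj[OF A] has_sum_hs_norm[OF B]]
  have le: "norm (cinner e (A (B e))) \<le> \<bar>norm (adj A e) * norm (B e)\<bar>" for e
    using norm_cinner_le[of "adj A e" "B e"] by (simp add: cinner_adj_left[OF A])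
  show sm: "(\<lambda>e. norm (cinner e (A (B e)))) summable_on some_onb"
    by (rule summable_on_comparison_test[OF CS(1) le]) simp
  have "cmod (trace (A \<circ> B)) \<le> (\<Sum>\<^sub>\<infinity>e\<in>some_onb. norm (cinner e (A (B e))))"
    unfolding trace_def o_def by (rule norm_infsum_bound[OF sm])
  also have "\<dots> \<le> (\<Sum>\<^sub>\<infinity>e\<in>some_onb. \<bar>norm (adj A e) * norm (B e)\<bar>)"
    by (rule infsum_mono[OF sm CS(1) le])
  also have "\<dots> \<le> sqrt ((hs_norm A)\<^sup>2) * sqrt ((hs_norm B)\<^sup>2)"
    by (rule CS(2))
  finally show "cmod (trace (A \<circ> B)) \<le> hs_norm A * hs_norm B"
    using hs_norm_nonneg[of A] hs_norm_nonneg[of B] by simp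
qed

lemma hs_norm_adj_products_le:
  fixes T :: "'a::chilbert_space \<Rightarrow> 'a"
  assumes T: "hilbert_schmidt T"
  shows "hs_norm (\<lambda>x. T (adj T x) + adj T (T x)) \<le> 2 * (hs_norm T)\<^sup>2"
proof -
  define N where "N = (hs_norm T)\<^sup>2"
  have g: "((\<lambda>e. 2 * N * (norm (adj T e))\<^sup>2 + 2 * N * (norm (T e))\<^sup>2) has_sum (2 * N * N + 2 * N * N))
      some_onb"
    unfolding N_def by (intro has_sum_add has_sum_cmult_right has_sum_hs_norm_adj[OF T] has_sum_hs_norm[OF T])
  have le: "(norm (T (adj T e) + adj T (T e)))\<^sup>2 \<le> 2 * N * (norm (adj T e))\<^sup>2 + 2 * N * (norm (T e))\<^sup>2"
    for e
  proof -
    have "(norm (T (adj T e) + adj T (T e)))\<^sup>2 \<le> (norm (T (adj T e)) + norm (adj T (T e)))\<^sup>2"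
      by (simp add: norm_triangle_ineq power_mono)
    also have "\<dots> \<le> 2 * (norm (T (adj T e)))\<^sup>2 + 2 * (norm (adj T (T e)))\<^sup>2"
      using sum_squares_bound[of "norm (T (adj T e))" "norm (adj T (T e))"]
      by (simp add: power2_sum)
    also have "\<dots> \<le> 2 * N * (norm (adj T e))\<^sup>2 + 2 * N * (norm (T e))\<^sup>2"
      using norm_sq_le_hs_norm[OF T, of "adj T e"] norm_sq_adj_le_hs_norm[OF T, of "T e"]
      by (simp add: N_def)
    finally show ?thesis .
  qed
  have "(hs_norm (\<lambda>x. T (adj T x) + adj T (T x)))\<^sup>2 \<le> (2 * N)\<^sup>2"
    using hs_norm_sq_le_has_sum(2)[OF g le] by (simp add: power2_eq_square)
  then show ?thesis
    unfolding N_def by (rule power2_le_imp_le) simp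
qed

lemma hs_norm_comp_sq_plus_norm_trace_le:
  fixes T S :: "'a::chilbert_space \<Rightarrow> 'a"
  assumes T: "hilbert_schmidt T" and S: "hilbert_schmidt S"
  shows "(hs_norm (T \<circ> S))\<^sup>2 + cmod (trace ((T \<circ> S) \<circ> (T \<circ> S))) \<le> 2 * ((hs_norm T)\<^sup>2 * (hs_norm S)\<^sup>2)"
proof -
  have TS: "hilbert_schmidt (T \<circ> S)"
    by (rule hilbert_schmidt_comp[OF T S])
  have "(hs_norm (T \<circ> S))\<^sup>2 \<le> (hs_norm T)\<^sup>2 * (hs_norm S)\<^sup>2"
    unfolding power_mult_distrib[symmetric]
    by (intro power_mono hs_norm_comp_le[OF T S] hs_norm_nonneg)
  moreover have "cmod (trace ((T \<circ> S) \<circ> (T \<circ> S))) \<le> (hs_norm (T \<circ> S))\<^sup>2"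
    using norm_trace_comp_le[OF TS TS] by (simp add: power2_eq_square)
  ultimately show ?thesis
    by linarith
qed

lemma trace_rotated_square_plus_adj:
  fixes T :: "'a::chilbert_space \<Rightarrow> 'a"
  assumes T: "hilbert_schmidt T"
  shows "trace (\<lambda>x. c *\<^sub>C T (c *\<^sub>C T x) + cnj c *\<^sub>C adj T (cnj c *\<^sub>C adj T x))
      = c\<^sup>2 * trace (T \<circ> T) + cnj (c\<^sup>2 * trace (T \<circ> T))"
proof -
  have clT: "T (a *\<^sub>C x) = a *\<^sub>C T x" for a x
    using T by (simp add: hilbert_schmidt_def bounded_clinear_def)
  define a where "a e = cinner e (T (T e))" for e
  have a: "a summable_on some_onb"
    unfolding a_def by (rule abs_summable_summable[OF abs_summable_trace_comp[OF T T]])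
  have "cinner e (c *\<^sub>C T (c *\<^sub>C T e) + cnj c *\<^sub>C adj T (cnj c *\<^sub>C adj T e))
      = c\<^sup>2 * a e + cnj (c\<^sup>2 * a e)" for e
  proof -
    have "cinner e (cnj c *\<^sub>C adj T (cnj c *\<^sub>C adj T e)) = cnj c * cnj c * cinner (T e) (adj T e)"
      by (simp add: cinner_scaleC_right flip: cinner_adj_right[OF T])
    also have "cinner (T e) (adj T e) = cnj (a e)"
      unfolding a_def by (metis cinner_commute cinner_adj_left[OF T])
    finally show ?thesis
      by (simp add: a_def clT cinner_add_right cinner_scaleC_right power2_eq_square)
  qed
  then have "trace (\<lambda>x. c *\<^sub>C T (c *\<^sub>C T x) + cnj c *\<^sub>C adj T (cnj c *\<^sub>C adj T x))
      = (\<Sum>\<^sub>\<infinity>e\<in>some_onb. c\<^sup>2 * a e + cnj (c\<^sup>2 * a e))"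
    by (simp add: trace_def)
  also have "\<dots> = c\<^sup>2 * infsum a some_onb + cnj (c\<^sup>2 * infsum a some_onb)"
    using a by (simp add: infsum_add summable_on_cmult_right infsum_cmult_right)
  finally show ?thesis
    by (simp add: trace_def a_def[abs_def] o_def)
qed

lemma SUP_norm_trace_rotated_le:
  fixes T :: "'a::chilbert_space \<Rightarrow> 'a"
  assumes T: "hilbert_schmidt T"
  shows "(SUP \<phi>::real. cmod (trace (\<lambda>x.
            exp (\<i> * complex_of_real \<phi>) *\<^sub>C T (exp (\<i> * complex_of_real \<phi>) *\<^sub>C T x)
          + exp (- \<i> * complex_of_real \<phi>) *\<^sub>C adj T (exp (- \<i> * complex_of_real \<phi>) *\<^sub>C adj T x))))
      \<le> 2 * cmod (trace (T \<circ> T))"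
proof (rule cSUP_least)
  fix \<phi> :: real
  define c where "c = exp (\<i> * complex_of_real \<phi>)"
  have "exp (- \<i> * complex_of_real \<phi>) = cnj c"
    unfolding c_def exp_cnj by simp
  moreover have "cmod c = 1"
    unfolding c_def by (simp add: norm_exp_i_times)
  ultimately show "cmod (trace (\<lambda>x.
            exp (\<i> * complex_of_real \<phi>) *\<^sub>C T (exp (\<i> * complex_of_real \<phi>) *\<^sub>C T x)
          + exp (- \<i> * complex_of_real \<phi>) *\<^sub>C adj T (exp (- \<i> * complex_of_real \<phi>) *\<^sub>C adj T x)))
      \<le> 2 * cmod (trace (T \<circ> T))"
    using norm_triangle_ineq[of "c\<^sup>2 * trace (T \<circ> T)" "cnj (c\<^sup>2 * trace (T \<circ> T))"]
    by (simp add: trace_rotated_square_plus_adj[OF T] norm_mult norm_power flip: c_def)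
qed simp

theorem corollary3p7:
  fixes T S :: "'a::chilbert_space \<Rightarrow> 'a"
  assumes "hilbert_schmidt T" and "hilbert_schmidt S"
  shows "(hs_norm (\<lambda>x. T (adj T x) + adj T (T x))
           + (SUP \<phi>::real. cmod (trace (\<lambda>x.
                (\<lambda>y. exp (\<i> * complex_of_real \<phi>) *\<^sub>C T y)
                  ((\<lambda>y. exp (\<i> * complex_of_real \<phi>) *\<^sub>C T y) x)
              + (\<lambda>y. exp (- \<i> * complex_of_real \<phi>) *\<^sub>C adj T y)
                  ((\<lambda>y. exp (- \<i> * complex_of_real \<phi>) *\<^sub>C adj T y) x))))
         \<le> 2 * ((hs_norm T)\<^sup>2 + cmod (trace (T \<circ> T))))
       \<and> ((hs_norm (T \<circ> S))\<^sup>2 + cmod (trace ((T \<circ> S) \<circ> (T \<circ> S)))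
         \<le> 4 * min ((hs_norm T)\<^sup>2 * ((hs_norm S)\<^sup>2 + cmod (trace (S \<circ> S))))
                   ((hs_norm S)\<^sup>2 * ((hs_norm T)\<^sup>2 + cmod (trace (T \<circ> T)))))"
proof -
  have min_args: "(hs_norm T)\<^sup>2 * (hs_norm S)\<^sup>2 \<le> (hs_norm T)\<^sup>2 * ((hs_norm S)\<^sup>2 + cmod (trace (S \<circ> S)))"
    "(hs_norm T)\<^sup>2 * (hs_norm S)\<^sup>2 \<le> (hs_norm S)\<^sup>2 * ((hs_norm T)\<^sup>2 + cmod (trace (T \<circ> T)))"
    by (simp_all add: distrib_left mult.commute)
  have nonneg: "(hs_norm T)\<^sup>2 * (hs_norm S)\<^sup>2 \<ge> 0"
    by simp
  show ?thesis
    using hs_norm_adj_products_le[OF assms(1)] SUP_norm_trace_rotated_le[OF assms(1)]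
      hs_norm_comp_sq_plus_norm_trace_le[OF assms] min_args
    by simp (use nonneg in linarith)
qed

end
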